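(* Let $0<\alpha\le 2\pi/3$. Then for all $u,v\in V$: $u$ and $v$ are connected in $G^-_\alpha$ if and only if they are connected in $G_R$.
   Context: Let $V$ be a finite set of pairwise distinct points (nodes) in the Euclidean plane, $d$ the Euclidean distance, and $R>0$. Let $G_R=(V,E)$ be the undirected graph with $E=\{\{u,v\}: u\neq v,\ d(u,v)\le R\}$. Fix a finite increasing sequence of radius levels $0<r_1<r_2<\dots<r_k=R$. For $u\in V$ and $1\le i\le k$ let $S_i(u)=\{v\in V\setminus\{u\}: d(u,v)\le r_i\}$. For $0<\alpha<2\pi$, a closed cone of width $\alpha$ with apex $u$ is a set $\{u+t(\cos\varphi,\sin\varphi): t\ge 0,\ \varphi\in[\theta-\alpha/2,\theta+\alpha/2]\}$ for some $\theta$. A finite set $S\subseteq V\setminus\{u\}$ has an $\alpha$-gap (at $u$) if some closed cone of width $\alpha$ with apex $u$ contains no node of $S$ (in particular $\emptyset$ has an $\alpha$-gap). The algorithm CBTC($\alpha$) assigns to each $u$ the index $i_u$ = the least $i\in\{1,\dots,k\}$ such that $S_i(u)$ has no $\alpha$-gap, or $i_u=k$ if there is no such $i$; set $N_\alpha(u)=S_{i_u}(u)$ and $N_\alpha=\{(u,v): v\in N_\alpha(u)\}$ (a directed relation, not necessarily symmetric). Let $E^-_\alpha=\{\{u,v\}: (u,v)\in N_\alpha\text{ and }(v,u)\in N_\alpha\}$ and $G^-_\alpha=(V,E^-_\alpha)$. *)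

theory Defs
  imports "HOL-Analysis.Analysis"
begin

text \<open>Points of the Euclidean plane are modelled as complex numbers; dist is the
Euclidean distance. Radius levels are r 1 < ... < r k = R.\<close>

definition S_level :: "complex set \<Rightarrow> (nat \<Rightarrow> real) \<Rightarrow> nat \<Rightarrow> complex \<Rightarrow> complex set" where
  "S_level V r i u = {v \<in> V - {u}. dist u v \<le> r i}"

definition cone :: "complex \<Rightarrow> real \<Rightarrow> real \<Rightarrow> complex set" where
  "cone u \<theta> \<alpha> = {u + complex_of_real t * cis \<phi> | t \<phi>.
      t \<ge> 0 \<and> \<theta> - \<alpha>/2 \<le> \<phi> \<and> \<phi> \<le> \<theta> + \<alpha>/2}"

definition has_gap :: "real \<Rightarrow> complex \<Rightarrow> complex set \<Rightarrow> bool" where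
  "has_gap \<alpha> u S \<longleftrightarrow> (\<exists>\<theta>. \<forall>v\<in>S. v \<notin> cone u \<theta> \<alpha>)"

definition cbtc_index :: "complex set \<Rightarrow> (nat \<Rightarrow> real) \<Rightarrow> nat \<Rightarrow> real \<Rightarrow> complex \<Rightarrow> nat" where
  "cbtc_index V r k \<alpha> u =
     (if \<exists>i\<in>{1..k}. \<not> has_gap \<alpha> u (S_level V r i u)
      then (LEAST i. i \<in> {1..k} \<and> \<not> has_gap \<alpha> u (S_level V r i u))
      else k)"

definition N_alpha :: "complex set \<Rightarrow> (nat \<Rightarrow> real) \<Rightarrow> nat \<Rightarrow> real \<Rightarrow> complex \<Rightarrow> complex set" where
  "N_alpha V r k \<alpha> u = S_level V r (cbtc_index V r k \<alpha> u) u"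

definition E_minus :: "complex set \<Rightarrow> (nat \<Rightarrow> real) \<Rightarrow> nat \<Rightarrow> real \<Rightarrow> complex \<Rightarrow> complex \<Rightarrow> bool" where
  "E_minus V r k \<alpha> u v \<longleftrightarrow> u \<in> V \<and> v \<in> V \<and> v \<in> N_alpha V r k \<alpha> u \<and> u \<in> N_alpha V r k \<alpha> v"

definition E_R :: "complex set \<Rightarrow> real \<Rightarrow> complex \<Rightarrow> complex \<Rightarrow> bool" where
  "E_R V R u v \<longleftrightarrow> u \<in> V \<and> v \<in> V \<and> u \<noteq> v \<and> dist u v \<le> R"

definition connected_in :: "(complex \<Rightarrow> complex \<Rightarrow> bool) \<Rightarrow> complex \<Rightarrow> complex \<Rightarrow> bool" where
  "connected_in E u v \<longleftrightarrow> E\<^sup>*\<^sup>* u v"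

end

(* Every edge of the CBTC graph has length at most R, so only the converse needs work.
   Let uv be an edge of G_R that is not symmetric in CBTC, say v is not in N_alpha(u).
   Then u stopped at a radius below d(u,v) because that level left no alpha-gap, so the
   cone of width alpha around the ray from u to v contains a neighbour w of u with
   d(u,w) < d(u,v). The angle vuw is at most alpha/2 <= pi/3, hence also d(w,v) < d(u,v).
   Replacing uv by uw and wv and inducting on the length of the edge (there are only
   finitely many pairs of nodes) connects u and v in the CBTC graph. *)

theory Submission
  imports Defs
begin

lemma finite_measure_induct [consumes 2, case_names less]:
  fixes f :: "'a \<Rightarrow> 'b::linorder"
  assumes "finite A" "x \<in> A"
    and step: "\<And>x. x \<in> A \<Longrightarrow> (\<And>y. y \<in> A \<Longrightarrow> f y < f x \<Longrightarrow> P y) \<Longrightarrow> P x"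
  shows "P x"
proof -
  define m where "m x = card {y \<in> A. f y < f x}" for x
  have "x \<in> A \<longrightarrow> P x"
  proof (induction x rule: measure_induct_rule[of m])
    case (less x)
    show ?case
    proof
      assume "x \<in> A"
      then show "P x"
      proof (rule step)
        fix y assume "y \<in> A" "f y < f x"
        then have "{z \<in> A. f z < f y} \<subset> {z \<in> A. f z < f x}"
          by auto
        then have "m y < m x"
          unfolding m_def using \<open>finite A\<close> by (simp add: psubset_card_mono)
        then show "P y"
          using less \<open>y \<in> A\<close> by blast
      qed
    qed
  qed
  then show ?thesis
    using \<open>x \<in> A\<close> by blast
qed

lemma norm_of_real_cis_minus_less:
  fixes t b \<psi> :: real
  assumes "0 < t" "t < b" "1/2 \<le> cos \<psi>"
  shows "cmod (of_real t * cis \<psi> - of_real b) < b"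
proof -
  have "(cmod (of_real t * cis \<psi> - of_real b))\<^sup>2 = (t * cos \<psi> - b)\<^sup>2 + (t * sin \<psi>)\<^sup>2"
    by (simp add: cmod_power2)
  also have "\<dots> = t\<^sup>2 * ((sin \<psi>)\<^sup>2 + (cos \<psi>)\<^sup>2) - 2 * t * b * cos \<psi> + b\<^sup>2"
    by (simp add: power2_eq_square; algebra)
  also have "\<dots> = t\<^sup>2 - 2 * t * b * cos \<psi> + b\<^sup>2"
    by simp
  also have "\<dots> \<le> t\<^sup>2 - t * b + b\<^sup>2"
    using mult_left_mono[OF assms(3), of "2 * t * b"] assms(1,2) by simp
  also have "\<dots> < b\<^sup>2"
    using assms(1,2) by (simp add: power2_eq_square)
  finally show ?thesis
    using assms(1,2) by (simp add: power2_less_imp_less)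
qed

lemma dist_less_if_in_cone:
  assumes w: "w \<in> cone u (Arg (v - u)) \<alpha>" and \<alpha>: "\<alpha> \<le> 2 * pi / 3"
    and "w \<noteq> u" and closer: "dist u w < dist u v"
  shows "dist w v < dist u v"
proof -
  define \<theta> where "\<theta> = Arg (v - u)"
  obtain t \<phi> where w_eq: "w = u + of_real t * cis \<phi>" and "0 \<le> t"
    and "\<theta> - \<alpha>/2 \<le> \<phi>" "\<phi> \<le> \<theta> + \<alpha>/2"
    using w unfolding cone_def \<theta>_def by blast
  then have "\<bar>\<phi> - \<theta>\<bar> \<le> pi/3"
    using \<alpha> by linarith
  then have "cos (pi/3) \<le> cos \<bar>\<phi> - \<theta>\<bar>"
    by (intro cos_monotone_0_pi_le) auto
  then have cos_ge: "1/2 \<le> cos (\<phi> - \<theta>)"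
    by (simp add: cos_60 cos_abs_real)
  have t_eq: "t = dist u w"
    using w_eq \<open>0 \<le> t\<close> by (simp add: dist_norm norm_mult)
  have "v - u = of_real (dist u v) * cis \<theta>"
    using rcis_cmod_Arg[of "v - u"] by (simp add: \<theta>_def rcis_def dist_norm norm_minus_commute)
  \<comment> \<open>rotating by -\<theta> puts v - u on the positive real axis\<close>
  then have "w - v = cis \<theta> * (of_real t * cis (\<phi> - \<theta>) - of_real (dist u v))"
    by (simp add: w_eq algebra_simps cis_mult flip: cis_divide)
  then have "dist w v = cmod (of_real t * cis (\<phi> - \<theta>) - of_real (dist u v))"
    by (simp add: dist_norm norm_mult)
  also have "\<dots> < dist u v"
    using norm_of_real_cis_minus_less[OF _ _ cos_ge] t_eq closer \<open>w \<noteq> u\<close> by simp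
  finally show ?thesis .
qed

lemma dist_less_if_not_in_S_level:
  assumes "v \<in> V" "v \<noteq> u" "v \<notin> S_level V r i u" "w \<in> S_level V r i u"
  shows "dist u w < dist u v"
  using assms by (auto simp: S_level_def)

locale cbtc =
  fixes V :: "complex set" and r :: "nat \<Rightarrow> real" and k :: nat and R \<alpha> :: real
  assumes finite_V: "finite V"
    and k_ge_1: "k \<ge> 1"
    and r_strict_mono: "\<And>i j. 1 \<le> i \<Longrightarrow> i < j \<Longrightarrow> j \<le> k \<Longrightarrow> r i < r j"
    and r_k: "r k = R"
    and alpha_le: "\<alpha> \<le> 2 * pi / 3"
begin

abbreviation N :: "complex \<Rightarrow> complex set" where
  "N \<equiv> N_alpha V r k \<alpha>"

lemma cbtc_index_mem: "cbtc_index V r k \<alpha> u \<in> {1..k}"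
proof (cases "\<exists>i\<in>{1..k}. \<not> has_gap \<alpha> u (S_level V r i u)")
  case True
  then have "\<exists>i. i \<in> {1..k} \<and> \<not> has_gap \<alpha> u (S_level V r i u)"
    by blast
  from LeastI_ex[OF this] True show ?thesis
    by (simp add: cbtc_index_def)
next
  case False
  then show ?thesis
    using k_ge_1 by (simp add: cbtc_index_def)
qed

lemma r_le_R: "i \<in> {1..k} \<Longrightarrow> r i \<le> R"
  using r_strict_mono[of i k] r_k by (cases "i = k") auto

lemma N_alpha_subset: "N u \<subseteq> {w \<in> V - {u}. dist u w \<le> R}"
  using cbtc_index_mem[of u] r_le_R[of "cbtc_index V r k \<alpha> u"]
  by (auto simp: N_alpha_def S_level_def)

lemma E_minus_imp_E_R: "E_minus V r k \<alpha> u v \<Longrightarrow> E_R V R u v"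
  using N_alpha_subset[of u] by (auto simp: E_minus_def E_R_def)

lemma N_alpha_no_gap:
  assumes "E_R V R u v" "v \<notin> N u"
  shows "\<not> has_gap \<alpha> u (N u)"
proof -
  have ex: "\<exists>i\<in>{1..k}. \<not> has_gap \<alpha> u (S_level V r i u)"
  proof (rule ccontr)
    assume "\<not> ?thesis"
    then have "N u = S_level V r k u"
      by (simp add: N_alpha_def cbtc_index_def)
    then show False
      using assms r_k by (auto simp: E_R_def S_level_def)
  qed
  then have "\<exists>i. i \<in> {1..k} \<and> \<not> has_gap \<alpha> u (S_level V r i u)"
    by blast
  from LeastI_ex[OF this] ex show ?thesis
    by (simp add: N_alpha_def cbtc_index_def)
qed

lemma shortcut_if_not_in_N_alpha:
  assumes uv: "E_R V R u v" and v_notin: "v \<notin> N u"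
  obtains w where "E_R V R u w" "E_R V R w v" "dist u w < dist u v" "dist w v < dist u v"
proof -
  obtain w where w: "w \<in> N u" and w_cone: "w \<in> cone u (Arg (v - u)) \<alpha>"
    using N_alpha_no_gap[OF assms] unfolding has_gap_def by blast
  have "w \<in> V" "w \<noteq> u"
    using w N_alpha_subset by auto
  have uw_less: "dist u w < dist u v"
    using dist_less_if_not_in_S_level[of v V u r] uv v_notin w
    by (auto simp: E_R_def N_alpha_def)
  have wv_less: "dist w v < dist u v"
    using dist_less_if_in_cone[OF w_cone alpha_le \<open>w \<noteq> u\<close> uw_less] .
  have "w \<noteq> v"
    using w v_notin by auto
  with uv uw_less wv_less \<open>w \<in> V\<close> \<open>w \<noteq> u\<close> show thesis
    by (intro that) (auto simp: E_R_def)
qed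

lemma E_R_imp_rtranclp_E_minus:
  assumes "E_R V R u v"
  shows "(E_minus V r k \<alpha>)\<^sup>*\<^sup>* u v"
proof -
  let ?E = "E_minus V r k \<alpha>"
  have sym: "symp ?E\<^sup>*\<^sup>*"
    by (intro symp_rtranclp sympI) (auto simp: E_minus_def)
  have "E_R V R (fst p) (snd p) \<longrightarrow> ?E\<^sup>*\<^sup>* (fst p) (snd p)" if "p \<in> V \<times> V" for p
    using finite_cartesian_product[OF finite_V finite_V] that
  proof (induction p rule: finite_measure_induct[where f = "\<lambda>p. dist (fst p) (snd p)"])
    case (less p)
    obtain u v where p: "p = (u, v)"
      by fastforce
    have IH: "?E\<^sup>*\<^sup>* x y" if "E_R V R x y" "dist x y < dist u v" for x y
      using less.IH[of "(x, y)"] that p by (auto simp: E_R_def)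
    show ?case
      unfolding p fst_conv snd_conv
    proof
      assume uv: "E_R V R u v"
      consider "?E u v" | "v \<notin> N u" | "u \<notin> N v"
        using uv by (auto simp: E_minus_def E_R_def)
      then show "?E\<^sup>*\<^sup>* u v"
      proof cases
        case 1
        then show ?thesis by blast
      next
        case 2
        then obtain w where "E_R V R u w" "E_R V R w v" "dist u w < dist u v" "dist w v < dist u v"
          using shortcut_if_not_in_N_alpha[OF uv] by blast
        then show ?thesis
          using IH rtranclp_trans by metis
      next
        case 3
        have vu: "E_R V R v u"
          using uv by (auto simp: E_R_def dist_commute)
        obtain w where "E_R V R v w" "E_R V R w u" "dist v w < dist u v" "dist w u < dist u v"
          using shortcut_if_not_in_N_alpha[OF vu 3] by (metis dist_commute)
        then have "?E\<^sup>*\<^sup>* v u"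
          using IH rtranclp_trans by metis
        then show ?thesis
          using sym by (simp add: sympD)
      qed
    qed
  qed
  from this[of "(u, v)"] show ?thesis
    using assms by (simp add: E_R_def)
qed

lemma rtranclp_E_minus_eq_rtranclp_E_R: "(E_minus V r k \<alpha>)\<^sup>*\<^sup>* = (E_R V R)\<^sup>*\<^sup>*"
proof (rule antisym)
  show "(E_minus V r k \<alpha>)\<^sup>*\<^sup>* \<le> (E_R V R)\<^sup>*\<^sup>*"
    by (rule rtranclp_mono) (auto intro: E_minus_imp_E_R)
  have "(E_R V R)\<^sup>*\<^sup>* \<le> ((E_minus V r k \<alpha>)\<^sup>*\<^sup>*)\<^sup>*\<^sup>*"
    by (rule rtranclp_mono) (auto intro: E_R_imp_rtranclp_E_minus)
  then show "(E_R V R)\<^sup>*\<^sup>* \<le> (E_minus V r k \<alpha>)\<^sup>*\<^sup>*"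
    by simp
qed

end

theorem theorem4:
  fixes V :: "complex set" and r :: "nat \<Rightarrow> real" and k :: nat and R \<alpha> :: real
  assumes "finite V"
    and "R > 0"
    and "k \<ge> 1"
    and "0 < r 1"
    and "\<And>i j. 1 \<le> i \<Longrightarrow> i < j \<Longrightarrow> j \<le> k \<Longrightarrow> r i < r j"
    and "r k = R"
    and "0 < \<alpha>" and "\<alpha> \<le> 2 * pi / 3"
    and "u \<in> V" and "v \<in> V"
  shows "connected_in (E_minus V r k \<alpha>) u v \<longleftrightarrow> connected_in (E_R V R) u v"
proof -
  interpret cbtc V r k R \<alpha>
    using assms by unfold_locales auto
  show ?thesis
    by (simp add: connected_in_def rtranclp_E_minus_eq_rtranclp_E_R)
qed

end
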